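(* Let $G$ be a finite primitive unitary reflection group of rank at least 2, let $P=\langle r\rangle$ be a parabolic subgroup of rank 1, where $r$ is a reflection of order $k$, and let $a$ be a root of $r$. Let $\boldsymbol\mu=\{\xi\in\mathbb{C}: ga=\xi a\text{ for some }g\in N_G(P)\}$ (a finite cyclic group whose order $m$ is a multiple of $k$) and $B=\{\xi^ka:\xi\in\boldsymbol\mu\}$. If $m/k$ and $k$ are coprime, then the setwise stabiliser $G_B$ of $B$ in $G$ is a complement to $P$ in $N_G(P)$. Conversely, if for some set $D$ of scalar multiples of $a$ the setwise stabiliser $G_D$ is a complement to $P$ in $N_G(P)$, then $m/k$ and $k$ are coprime.
   Context: $V$ is a finite-dimensional complex vector space with a positive definite Hermitian form. A reflection is a finite-order linear map whose fixed space is a hyperplane; a root of a reflection is a non-zero vector orthogonal to its fixed hyperplane. A unitary reflection group is a finite group of form-preserving linear maps of $V$ generated by reflections; its rank is $\dim V$. $G$ is primitive if there is no decomposition $V=V_1\oplus\cdots\oplus V_k$, $k>1$, into non-zero subspaces permuted by $G$. A parabolic subgroup is the pointwise stabiliser in $G$ of a subset of $V$; rank 1 means its fixed space is a hyperplane. A complement to $P$ in $N_G(P)$ is a subgroup $H$ with $N_G(P)=PH$, $P\cap H=1$. *)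

theory Defs
  imports "HOL-Analysis.Analysis"
begin

text \<open>V = complex ^ 'n with the standard positive definite Hermitian form;
linear maps of V are n x n complex matrices acting by (*v).\<close>

type_synonym 'n cmat = "complex ^ ('n::finite) ^ 'n"

definition herm :: "complex ^ ('n::finite) \<Rightarrow> complex ^ 'n \<Rightarrow> complex" where
  "herm x y = (\<Sum>i\<in>UNIV. x $ i * cnj (y $ i))"

definition mpow :: "('n::finite) cmat \<Rightarrow> nat \<Rightarrow> 'n cmat" where
  "mpow A j = (((**) A) ^^ j) (mat 1)"

definition unitary :: "('n::finite) cmat \<Rightarrow> bool" where
  "unitary A \<longleftrightarrow> (\<forall>x y. herm (A *v x) (A *v y) = herm x y)"

definition fixed_space :: "('n::finite) cmat \<Rightarrow> (complex ^ 'n) set" where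
  "fixed_space A = {x. A *v x = x}"

definition hyperplane :: "(complex ^ 'n) set \<Rightarrow> bool" where
  "hyperplane W \<longleftrightarrow> vec.subspace W \<and> vec.dim W = CARD('n) - 1"

definition is_reflection :: "('n::finite) cmat \<Rightarrow> bool" where
  "is_reflection A \<longleftrightarrow> (\<exists>j>0. mpow A j = mat 1) \<and> hyperplane (fixed_space A)"

definition is_root :: "('n::finite) cmat \<Rightarrow> complex ^ 'n \<Rightarrow> bool" where
  "is_root A a \<longleftrightarrow> a \<noteq> 0 \<and> (\<forall>x\<in>fixed_space A. herm x a = 0)"

definition mat_order :: "('n::finite) cmat \<Rightarrow> nat" where
  "mat_order A = (LEAST j. j > 0 \<and> mpow A j = mat 1)"

text \<open>The submonoid generated by a set of matrices (for a finite set of invertible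
matrices this is the generated subgroup).\<close>
inductive_set mgen :: "('n::finite) cmat set \<Rightarrow> 'n cmat set" for R where
  one: "mat 1 \<in> mgen R"
| step: "r \<in> R \<Longrightarrow> x \<in> mgen R \<Longrightarrow> r ** x \<in> mgen R"

definition is_subgroup :: "('n::finite) cmat set \<Rightarrow> bool" where
  "is_subgroup H \<longleftrightarrow> mat 1 \<in> H \<and> (\<forall>g\<in>H. \<forall>h\<in>H. g ** h \<in> H)
     \<and> (\<forall>g\<in>H. invertible g \<and> matrix_inv g \<in> H)"

definition unitary_reflection_group :: "('n::finite) cmat set \<Rightarrow> bool" where
  "unitary_reflection_group G \<longleftrightarrow> finite G \<and> is_subgroup G \<and> (\<forall>g\<in>G. unitary g)
     \<and> G = mgen {r\<in>G. is_reflection r}"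

definition primitive :: "('n::finite) cmat set \<Rightarrow> bool" where
  "primitive G \<longleftrightarrow> \<not> (\<exists>S :: (complex ^ 'n) set set.
       finite S \<and> card S > 1
     \<and> (\<forall>W\<in>S. vec.subspace W \<and> W \<noteq> {0})
     \<and> vec.span (\<Union>S) = UNIV
     \<and> (\<forall>W\<in>S. W \<inter> vec.span (\<Union>(S - {W})) = {0})
     \<and> (\<forall>g\<in>G. \<forall>W\<in>S. (\<lambda>x. g *v x) ` W \<in> S))"

definition pointwise_stab :: "('n::finite) cmat set \<Rightarrow> (complex ^ 'n) set \<Rightarrow> 'n cmat set" where
  "pointwise_stab G X = {g\<in>G. \<forall>x\<in>X. g *v x = x}"

definition setwise_stab :: "('n::finite) cmat set \<Rightarrow> (complex ^ 'n) set \<Rightarrow> 'n cmat set" where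
  "setwise_stab G X = {g\<in>G. (\<lambda>x. g *v x) ` X = X}"

definition parabolic :: "('n::finite) cmat set \<Rightarrow> 'n cmat set \<Rightarrow> bool" where
  "parabolic G P \<longleftrightarrow> (\<exists>X. P = pointwise_stab G X)"

definition parabolic_rank1 :: "('n::finite) cmat set \<Rightarrow> 'n cmat set \<Rightarrow> bool" where
  "parabolic_rank1 G P \<longleftrightarrow> parabolic G P \<and> hyperplane {x. \<forall>g\<in>P. g *v x = x}"

definition normaliser :: "('n::finite) cmat set \<Rightarrow> 'n cmat set \<Rightarrow> 'n cmat set" where
  "normaliser G P = {g\<in>G. (\<lambda>p. g ** p ** matrix_inv g) ` P = P}"

definition complement :: "('n::finite) cmat set \<Rightarrow> 'n cmat set \<Rightarrow> 'n cmat set \<Rightarrow> bool" where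
  "complement P N H \<longleftrightarrow> is_subgroup H \<and> H \<subseteq> N
     \<and> {p ** h | p h. p \<in> P \<and> h \<in> H} = N \<and> P \<inter> H = {mat 1}"

end

theory Submission
  imports Defs
begin

text \<open>Let \<open>H\<close> be the reflecting hyperplane of \<open>r\<close>, so that \<open>V = H \<oplus> \<complex>a\<close>. An element
of \<open>G\<close> normalises \<open>P = \<langle>r\<rangle>\<close> exactly when \<open>a\<close> is one of its eigenvectors, so \<open>\<mu>\<close> is the
group of eigenvalues on \<open>a\<close> of elements of \<open>G\<close>; as a finite subgroup of \<open>\<complex>\<^sup>\<times>\<close> it consists of
the \<open>m\<close>-th roots of unity, and \<open>P\<close> contributes exactly the \<open>k\<close>-th roots. If \<open>g a = \<omega>\<^sup>j \<eta> a\<close>,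
where \<open>\<omega>\<close> is the eigenvalue of \<open>r\<close> on \<open>a\<close>, then \<open>g = r\<^sup>j h\<close> with \<open>h a = \<eta> a\<close>; and every
\<open>G\<^sub>D\<close> contains all elements fixing \<open>a\<close>. So a complement of the form \<open>G\<^sub>D\<close> amounts to a
complement of the \<open>k\<close>-th roots of unity in the cyclic group \<open>\<mu>\<close> of order \<open>m\<close>: one exists
iff \<open>gcd(m/k, k) = 1\<close>, and then it is the group of \<open>k\<close>-th powers, whose stabiliser is \<open>G\<^sub>B\<close>.\<close>

subsection \<open>Roots of unity\<close>

lemma power_gcd_eq_1:
  fixes z :: "'a::comm_monoid_mult"
  assumes "z ^ a = 1" "z ^ b = 1" "a \<noteq> 0"
  shows "z ^ gcd a b = 1"
proof -
  obtain x y where "a * x = b * y + gcd a b" using bezout_nat[OF assms(3)] by blast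
  then have "z ^ (a * x) = z ^ (b * y) * z ^ gcd a b" by (simp add: power_add)
  then show ?thesis using assms by (simp add: power_mult)
qed

lemma power_card_eq_1_if_mult_closed:
  fixes M :: "complex set"
  assumes "finite M" "0 \<notin> M" "\<And>x y. x \<in> M \<Longrightarrow> y \<in> M \<Longrightarrow> x * y \<in> M" "\<xi> \<in> M"
  shows "\<xi> ^ card M = 1"
proof -
  have inj: "inj_on ((*) \<xi>) M" using assms(2,4) by (auto simp: inj_on_def)
  have "(*) \<xi> ` M \<subseteq> M" using assms(3,4) by auto
  then have "(*) \<xi> ` M = M" using card_subset_eq[OF assms(1)] card_image[OF inj] by blast
  then have "prod id M = prod ((*) \<xi>) M" using prod.reindex[OF inj, of id] by simp
  also have "\<dots> = \<xi> ^ card M * prod id M" by (simp add: prod.distrib)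
  finally have "(\<xi> ^ card M - 1) * prod id M = 0" by (simp add: algebra_simps)
  moreover have "prod id M \<noteq> 0" using assms(1,2) by (auto simp: prod_zero_iff)
  ultimately show ?thesis by simp
qed

lemma mult_closed_eq_roots_unity:
  fixes M :: "complex set"
  assumes "finite M" "0 \<notin> M" "\<And>x y. x \<in> M \<Longrightarrow> y \<in> M \<Longrightarrow> x * y \<in> M" "1 \<in> M"
  shows "M = {z. z ^ card M = 1}"
proof (rule card_seteq)
  have "card M \<ge> 1" using assms(1,4) by (metis card_0_eq empty_iff less_one not_le)
  then show "finite {z::complex. z ^ card M = 1}" "card {z::complex. z ^ card M = 1} \<le> card M"
    by (simp_all add: finite_roots_unity card_complex_roots_unity)
  show "M \<subseteq> {z. z ^ card M = 1}" using power_card_eq_1_if_mult_closed[OF assms(1-3)] by blast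
qed

definition unit_root :: "nat \<Rightarrow> complex" where
  "unit_root n = exp (2 * of_real pi * \<i> / of_nat n)"

lemma unit_root_power: "unit_root n ^ j = exp (2 * of_real pi * \<i> * of_nat j / of_nat n)"
  unfolding unit_root_def exp_of_nat_mult[symmetric] by (simp add: algebra_simps)

lemma unit_root_power_eq_1_iff: "n \<ge> 1 \<Longrightarrow> unit_root n ^ j = 1 \<longleftrightarrow> n dvd j"
  by (simp add: unit_root_power complex_root_unity_eq_1)

lemma roots_unity_eq_unit_root_powers:
  assumes "n \<ge> 1"
  shows "{z. z ^ n = 1} = {unit_root n ^ j | j. True}"
proof -
  have "unit_root n ^ j \<in> {z. z ^ n = 1}" for j
    using unit_root_power_eq_1_iff[OF assms]
    by (simp add: power_mult[symmetric] mult.commute[of j])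
  then show ?thesis
    using complex_roots_unity[OF assms] by (auto simp: unit_root_power)
qed

lemma roots_unity_eq_powers_of_order:
  fixes \<omega> :: complex
  assumes "k > 0" and order: "\<And>j. \<omega> ^ j = 1 \<longleftrightarrow> k dvd j"
  shows "{z. z ^ k = 1} = range ((^) \<omega>)"
proof -
  have powers_are_roots: "(\<omega> ^ j) ^ k = 1" for j
    using order by (simp add: power_mult[symmetric])
  have "\<omega> \<noteq> 0" using order[of k] assms(1) by (metis dvd_refl power_eq_0_iff zero_neq_one)
  have "\<omega> ^ i \<noteq> \<omega> ^ j" if "i < j" "j < k" for i j
  proof
    assume "\<omega> ^ i = \<omega> ^ j"
    moreover have "\<omega> ^ i * \<omega> ^ (j - i) = \<omega> ^ j" using that by (simp add: power_add[symmetric])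
    ultimately have "\<omega> ^ i * \<omega> ^ (j - i) = \<omega> ^ i * 1" by simp
    then have "k dvd j - i" using \<open>\<omega> \<noteq> 0\<close> order by simp
    then show False using that by (simp add: nat_dvd_not_less)
  qed
  then have inj: "inj_on ((^) \<omega>) {..<k}" by (intro linorder_inj_onI') auto
  have "(^) \<omega> ` {..<k} = {z. z ^ k = 1}"
  proof (rule card_subset_eq)
    show "finite {z::complex. z ^ k = 1}" using assms(1) by (simp add: finite_roots_unity)
    show "(^) \<omega> ` {..<k} \<subseteq> {z. z ^ k = 1}" using powers_are_roots by auto
    show "card ((^) \<omega> ` {..<k}) = card {z::complex. z ^ k = 1}"
      using card_image[OF inj] assms(1) by (simp add: card_complex_roots_unity)
  qed
  then show ?thesis using powers_are_roots by blast
qed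

lemma root_unity_split_coprime:
  fixes \<xi> :: complex
  assumes "coprime d k" "k > 0" "\<xi> ^ (k * d) = 1"
  shows "\<exists>w x. w ^ k = 1 \<and> \<xi> = w * (\<xi> ^ x) ^ k"
proof -
  obtain x y where xy: "k * x = d * y + 1"
    using bezout_nat[of k d] assms(1,2) by (auto simp: coprime_iff_gcd_eq_1 gcd.commute)
  \<comment> \<open>\<open>w\<close> inverts \<open>\<xi>\<^sup>d\<^sup>y\<close>, since \<open>(\<xi>\<^sup>d\<^sup>y)\<^sup>k = 1\<close>; then \<open>(\<xi>\<^sup>x)\<^sup>k = \<xi>\<^sup>d\<^sup>y \<xi>\<close> gives the split\<close>
  define w where "w = \<xi> ^ (d * y * (k - 1))"
  have "w ^ k = (\<xi> ^ (k * d)) ^ (y * (k - 1))" by (simp add: w_def power_mult[symmetric] mult_ac)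
  moreover have "d * y * (k - 1) + k * x = k * d * y + 1"
    using xy assms(2) by (cases k) (auto simp: algebra_simps)
  then have "w * (\<xi> ^ x) ^ k = (\<xi> ^ (k * d)) ^ y * \<xi>"
    by (simp add: w_def power_mult[symmetric] power_add[symmetric] mult.commute[of x])
  ultimately have "w ^ k = 1 \<and> \<xi> = w * (\<xi> ^ x) ^ k" using assms(3) by simp
  then show ?thesis by blast
qed

lemma root_unity_eq_1_if_coprime:
  fixes z :: complex
  assumes "coprime d k" "k > 0" "z ^ k = 1" "z ^ d = 1"
  shows "z = 1"
  using power_gcd_eq_1[OF assms(3,4)] assms(1,2) by (simp add: coprime_iff_gcd_eq_1 gcd.commute)

lemma coprime_if_roots_unity_split:
  fixes \<zeta> s w :: complex
  assumes "k > 0" "d > 0"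
    and order: "\<And>j. \<zeta> ^ j = 1 \<longleftrightarrow> k * d dvd j"
    and split: "\<zeta> = s * w" "w ^ k = 1" "s ^ (k * d) = 1"
    and no_kth_roots: "\<And>n. (s ^ n) ^ k = 1 \<Longrightarrow> s ^ n = 1"
  shows "coprime d k"
proof -
  \<comment> \<open>with \<open>e = gcd d k\<close>, both factors of \<open>\<zeta>\<close> are killed by the exponent \<open>k d / e\<close>\<close>
  define e where "e = gcd d k"
  obtain d' k' where d': "d = e * d'" and k': "k = e * k'" unfolding e_def by (meson gcd_dvd1 gcd_dvd2 dvdE)
  have "e > 0" using assms(1) by (simp add: e_def)
  have "(s ^ (k * d')) ^ k = (s ^ (k * d)) ^ k'" by (simp add: d' k' power_mult[symmetric] mult_ac)
  then have "s ^ (k * d') = 1" using no_kth_roots split(3) by simp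
  moreover have "w ^ (k * d') = 1" using split(2) by (simp add: power_mult)
  ultimately have "\<zeta> ^ (k * d') = 1" using split(1) by (simp add: power_mult_distrib)
  then have "k * (e * d') dvd k * d'" using order d' by simp
  then have "e = 1" using assms \<open>e > 0\<close> d' by (simp add: dvd_mult_cancel1)
  then show ?thesis by (simp add: e_def coprime_iff_gcd_eq_1)
qed

subsection \<open>The Hermitian form and matrices\<close>

lemma herm_add_left: "herm (x + y) z = herm x z + herm y z"
  by (simp add: herm_def distrib_right sum.distrib)

lemma herm_add_right: "herm z (x + y) = herm z x + herm z y"
  by (simp add: herm_def distrib_left sum.distrib)

lemma herm_smult_left: "herm (c *s x) y = c * herm x y"
  by (simp add: herm_def sum_distrib_left mult.assoc)

lemma herm_smult_right: "herm x (c *s y) = cnj c * herm x y"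
  by (simp add: herm_def sum_distrib_left mult_ac)

lemma herm_self_eq_0_iff: "herm x x = 0 \<longleftrightarrow> x = 0"
proof
  assume "herm x x = 0"
  moreover have "herm x x = complex_of_real (\<Sum>i\<in>UNIV. (Re (x$i))\<^sup>2 + (Im (x$i))\<^sup>2)"
    unfolding herm_def of_real_sum by (simp add: complex_mult_cnj)
  ultimately have "(\<Sum>i\<in>UNIV. (Re (x$i))\<^sup>2 + (Im (x$i))\<^sup>2) = 0"
    by (metis of_real_eq_0_iff)
  then have "\<forall>i. (Re (x$i))\<^sup>2 + (Im (x$i))\<^sup>2 = 0"
    by (subst (asm) sum_nonneg_eq_0_iff) auto
  then show "x = 0" by (simp add: vec_eq_iff complex_eq_iff)
qed (simp add: herm_def)

lemma vector_smult_cancel_right: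
  fixes a :: "'a::field ^ 'n"
  assumes "a \<noteq> 0"
  shows "c *s a = d *s a \<longleftrightarrow> c = d"
proof
  assume eq: "c *s a = d *s a"
  obtain i where "a $ i \<noteq> 0" using assms by (metis vec_eq_iff zero_index)
  moreover have "(c *s a) $ i = (d *s a) $ i" by (simp only: eq)
  ultimately show "c = d" by simp
qed simp

lemma matrix_mul_eigenvector:
  fixes A B :: "'a::field ^ 'n ^ 'n"
  assumes "A *v x = c *s x" "B *v x = d *s x"
  shows "(A ** B) *v x = (c * d) *s x"
  using assms by (simp add: matrix_vector_mul_assoc[symmetric] vector_scalar_commute
      vector_smult_assoc mult.commute)

lemma mpow_0 [simp]: "mpow A 0 = mat 1"
  by (simp add: mpow_def)

lemma mpow_Suc: "mpow A (Suc j) = A ** mpow A j"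
  by (simp add: mpow_def)

lemma mpow_add: "mpow A (i + j) = mpow A i ** mpow A j"
  by (induction i) (simp_all add: mpow_Suc matrix_mul_assoc)

lemma mpow_mult_eq_1: "mpow A k = mat 1 \<Longrightarrow> mpow A (k * j) = mat 1"
  by (induction j) (simp_all add: mpow_add)

lemma mpow_eigenvector: "A *v x = c *s x \<Longrightarrow> mpow A j *v x = c ^ j *s x"
  by (induction j) (simp_all add: mpow_Suc matrix_mul_eigenvector[symmetric])

lemma mpow_eq_1_iff_mat_order_dvd:
  assumes "\<exists>j>0. mpow A j = mat 1"
  shows "mpow A j = mat 1 \<longleftrightarrow> mat_order A dvd j"
proof -
  define k where "k = mat_order A"
  have "k > 0" and k: "mpow A k = mat 1"
    using LeastI_ex[OF assms] by (simp_all add: k_def mat_order_def)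
  have "mpow A j = mpow A (k * (j div k)) ** mpow A (j mod k)"
    by (simp add: mpow_add[symmetric])
  then have "mpow A j = mpow A (j mod k)" using mpow_mult_eq_1[OF k] by simp
  moreover have "mpow A (j mod k) \<noteq> mat 1" if "j mod k > 0"
  proof
    assume "mpow A (j mod k) = mat 1"
    then have "k \<le> j mod k" using that unfolding k_def mat_order_def by (intro Least_le) simp
    then show False using mod_less_divisor[OF \<open>k > 0\<close>, of j] by linarith
  qed
  ultimately show ?thesis using k by (auto simp: dvd_eq_mod_eq_0 k_def[symmetric])
qed

lemma matrix_inv_right: "invertible A \<Longrightarrow> A ** matrix_inv A = mat 1"
  and matrix_inv_left: "invertible A \<Longrightarrow> matrix_inv A ** A = mat 1"
  using someI_ex[of "\<lambda>A'. A ** A' = mat 1 \<and> A' ** A = mat 1"]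
  by (auto simp: matrix_inv_def invertible_def)

lemma is_subgroup_mpow: "is_subgroup G \<Longrightarrow> A \<in> G \<Longrightarrow> mpow A j \<in> G"
  by (induction j) (auto simp: is_subgroup_def mpow_Suc)

lemma image_matrix_mul: "(\<lambda>x. (A ** B) *v x) ` X = (\<lambda>x. A *v x) ` (\<lambda>x. B *v x) ` X"
  by (simp add: image_image matrix_vector_mul_assoc[symmetric])

lemma is_subgroup_setwise_stab:
  assumes "is_subgroup G"
  shows "is_subgroup (setwise_stab G X)"
  unfolding is_subgroup_def
proof (intro conjI ballI)
  show "mat 1 \<in> setwise_stab G X" using assms by (simp add: is_subgroup_def setwise_stab_def)
next
  fix g h assume "g \<in> setwise_stab G X" "h \<in> setwise_stab G X"
  then show "g ** h \<in> setwise_stab G X"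
    using assms by (simp add: is_subgroup_def setwise_stab_def image_matrix_mul)
next
  fix g assume g: "g \<in> setwise_stab G X"
  then show "invertible g" using assms by (simp add: is_subgroup_def setwise_stab_def)
  then have "(\<lambda>x. matrix_inv g *v x) ` X = (\<lambda>x. (matrix_inv g ** g) *v x) ` X"
    using g by (simp add: image_matrix_mul setwise_stab_def)
  then show "matrix_inv g \<in> setwise_stab G X"
    using assms g \<open>invertible g\<close> by (simp add: is_subgroup_def setwise_stab_def matrix_inv_left)
qed

subsection \<open>A reflection together with a root\<close>

locale reflection_with_root =
  fixes G P :: "('n::finite) cmat set" and r :: "'n cmat" and a :: "complex ^ 'n" and k :: nat
  assumes G_subgroup: "is_subgroup G" and G_finite: "finite G" and G_unitary: "\<forall>g\<in>G. unitary g"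
    and r_in_G: "r \<in> G" and r_reflection: "is_reflection r"
    and P_eq: "P = {mpow r j | j. True}" and k_eq: "k = mat_order r" and a_root: "is_root r a"
begin

lemma G_one: "mat 1 \<in> G"
  and G_mult: "g \<in> G \<Longrightarrow> h \<in> G \<Longrightarrow> g ** h \<in> G"
  and G_matrix_inv: "g \<in> G \<Longrightarrow> matrix_inv g \<in> G"
  and G_invertible: "g \<in> G \<Longrightarrow> invertible g"
  using G_subgroup by (simp_all add: is_subgroup_def)

lemma G_inv_cancel: "g \<in> G \<Longrightarrow> matrix_inv g *v (g *v x) = x"
  and G_cancel_inv: "g \<in> G \<Longrightarrow> g *v (matrix_inv g *v x) = x"
  by (simp_all add: matrix_vector_mul_assoc matrix_inv_left matrix_inv_right G_invertible)

lemma G_herm: "g \<in> G \<Longrightarrow> herm (g *v x) (g *v y) = herm x y"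
  using G_unitary by (simp add: unitary_def)

lemma mpow_r_in_G: "mpow r j \<in> G"
  using is_subgroup_mpow[OF G_subgroup r_in_G] .

lemma mpow_r_in_P: "mpow r j \<in> P"
  by (auto simp: P_eq)

abbreviation H where "H \<equiv> fixed_space r"

lemma H_subspace: "vec.subspace H" and H_dim: "vec.dim H = CARD('n) - 1"
  using r_reflection by (auto simp: is_reflection_def hyperplane_def)

lemma r_fixes_H: "h \<in> H \<Longrightarrow> r *v h = h"
  by (simp add: fixed_space_def)

lemma a_nonzero: "a \<noteq> 0" and herm_H_a: "h \<in> H \<Longrightarrow> herm h a = 0"
  using a_root by (simp_all add: is_root_def)

lemma herm_a_a_nonzero: "herm a a \<noteq> 0"
  using a_nonzero herm_self_eq_0_iff by blast

lemma H_plus_line: "\<exists>h\<in>H. \<exists>c. v = h + c *s a"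
proof -
  have "a \<notin> vec.span H"
    using H_subspace herm_H_a herm_a_a_nonzero by (metis vec.span_eq_iff)
  then have "vec.dim (insert a H) = CARD('n)"
    using vec.dim_insert[of a H] H_dim by simp
  then have "vec.span (insert a H) = vec.span UNIV"
    using vec_dim_card[where 'a=complex and 'n='n] by (intro vec.dim_eq_span) simp_all
  then have "v \<in> vec.span (insert a H)" by simp
  then obtain c where "v - c *s a \<in> vec.span H" unfolding vec.span_insert by blast
  then have "v - c *s a \<in> H" using H_subspace by (metis vec.span_eq_iff)
  then show ?thesis by (intro bexI[of _ "v - c *s a"] exI[of _ c]) auto
qed

lemma orthogonal_H_in_line:
  assumes "\<forall>h\<in>H. herm h v = 0"
  shows "\<exists>c. v = c *s a"
proof -
  obtain h c where h: "h \<in> H" "v = h + c *s a" using H_plus_line by blast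
  then have "herm h h = herm h v" using herm_H_a by (simp add: herm_add_right herm_smult_right)
  then have "herm h h = 0" using assms h(1) by simp
  then have "h = 0" using herm_self_eq_0_iff by blast
  then show ?thesis using h(2) by auto
qed

lemma orthogonal_a_in_H:
  assumes "herm x a = 0"
  shows "x \<in> H"
proof -
  obtain h c where h: "h \<in> H" "x = h + c *s a" using H_plus_line by blast
  then have "herm x a = c * herm a a" using herm_H_a by (simp add: herm_add_left herm_smult_left)
  then have "c = 0" using assms herm_a_a_nonzero by simp
  then show ?thesis using h by simp
qed

lemma matrix_eq_on_H_and_a:
  assumes "A *v a = B *v a" "\<forall>h\<in>H. A *v h = B *v h"
  shows "A = B"
proof -
  have "A *v v = B *v v" for v
    using H_plus_line[of v] assms
    by (auto simp: matrix_vector_right_distrib vector_scalar_commute)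
  then show ?thesis by (simp add: matrix_eq)
qed

lemma eigenvalue_nonzero: "g \<in> G \<Longrightarrow> g *v a = c *s a \<Longrightarrow> c \<noteq> 0"
  using G_inv_cancel[of g a] a_nonzero by auto

lemma eigenvector_inverse:
  assumes "g \<in> G" "g *v a = c *s a"
  shows "matrix_inv g *v a = inverse c *s a"
proof -
  have "a = c *s (matrix_inv g *v a)"
    using G_inv_cancel[OF assms(1), of a] assms(2) by (simp add: vector_scalar_commute)
  then show ?thesis using eigenvalue_nonzero[OF assms]
    by (metis vector_smult_assoc left_inverse vector_smult_lid)
qed

lemma eigenvector_preserves_H:
  assumes "g \<in> G" "g *v a = c *s a" "h \<in> H"
  shows "g *v h \<in> H"
proof -
  have "a = g *v (inverse c *s a)"
    using assms(2) eigenvalue_nonzero[OF assms(1,2)] by (simp add: vector_scalar_commute vector_smult_assoc)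
  then have "herm (g *v h) a = herm h (inverse c *s a)" using G_herm assms(1) by metis
  then show ?thesis using herm_H_a assms(3) by (simp add: herm_smult_right orthogonal_a_in_H)
qed

definition \<omega> where "\<omega> = (SOME c. r *v a = c *s a)"

lemma r_a: "r *v a = \<omega> *s a"
proof -
  have "herm h (r *v a) = 0" if "h \<in> H" for h
    using G_herm[OF r_in_G, of h a] r_fixes_H[OF that] herm_H_a[OF that] by simp
  then have "\<exists>c. r *v a = c *s a" using orthogonal_H_in_line by blast
  then show ?thesis unfolding \<omega>_def by (rule someI_ex)
qed

lemma mpow_r_a: "mpow r j *v a = \<omega> ^ j *s a"
  using mpow_eigenvector[OF r_a] .

lemma mpow_r_fixes_H: "h \<in> H \<Longrightarrow> mpow r j *v h = h"
  using mpow_eigenvector[of r h 1 j] r_fixes_H by simp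

lemma mpow_r_eq_1_iff: "mpow r j = mat 1 \<longleftrightarrow> k dvd j"
proof -
  have "\<exists>j>0. mpow r j = mat 1" using r_reflection by (simp add: is_reflection_def)
  from mpow_eq_1_iff_mat_order_dvd[OF this] show ?thesis by (simp add: k_eq)
qed

lemma k_pos: "k > 0"
  using r_reflection mpow_r_eq_1_iff by (auto simp: is_reflection_def dest: dvd_imp_le)

lemma omega_power_eq_1_iff: "\<omega> ^ j = 1 \<longleftrightarrow> k dvd j"
proof -
  have "mpow r j = mat 1 \<longleftrightarrow> \<omega> ^ j *s a = 1 *s a"
    using matrix_eq_on_H_and_a[of "mpow r j" "mat 1"] mpow_r_fixes_H by (auto simp: mpow_r_a[symmetric])
  then show ?thesis using mpow_r_eq_1_iff vector_smult_cancel_right[OF a_nonzero, of "\<omega> ^ j" 1] by simp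
qed

lemma kth_root_unity_eq_omega_power: "z ^ k = 1 \<Longrightarrow> \<exists>j. z = \<omega> ^ j"
  using roots_unity_eq_powers_of_order[OF k_pos omega_power_eq_1_iff] by blast

lemma split_off_mpow_r:
  assumes "g \<in> G" "g *v a = (\<omega> ^ j * u) *s a"
  shows "\<exists>h\<in>G. g = mpow r j ** h \<and> h *v a = u *s a"
proof (intro bexI conjI)
  define h where "h = mpow r ((k - 1) * j) ** g"
  show "h \<in> G" unfolding h_def using G_mult mpow_r_in_G assms(1) by blast
  have jk: "j + (k - 1) * j = k * j" using k_pos by (cases k) auto
  then show "g = mpow r j ** h"
    using mpow_r_eq_1_iff[of "k * j"] by (simp add: h_def matrix_mul_assoc mpow_add[symmetric])
  have "\<omega> ^ ((k - 1) * j) * \<omega> ^ j = 1"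
    using jk omega_power_eq_1_iff[of "k * j"] by (simp add: power_add[symmetric] add.commute)
  then show "h *v a = u *s a"
    unfolding h_def using matrix_mul_eigenvector[OF mpow_r_a assms(2)] by (simp add: mult.assoc)
qed

lemma normaliser_eigenvector:
  assumes "g \<in> normaliser G P"
  shows "\<exists>c. g *v a = c *s a"
proof -
  have g: "g \<in> G" and conj_P: "(\<lambda>p. g ** p ** matrix_inv g) ` P = P"
    using assms by (auto simp: normaliser_def)
  have "r \<in> P" using mpow_r_in_P[of 1] by (simp add: mpow_Suc)
  then obtain j where j: "g ** r ** matrix_inv g = mpow r j" using conj_P P_eq by blast
  have "herm h (g *v a) = 0" if h: "h \<in> H" for h
  proof -
    define y where "y = matrix_inv g *v h"
    have "r *v y = matrix_inv g *v ((g ** r ** matrix_inv g) *v h)"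
      using G_inv_cancel[OF g] by (simp add: y_def matrix_vector_mul_assoc[symmetric])
    then have "y \<in> H" using j mpow_r_fixes_H[OF h] by (simp add: y_def fixed_space_def)
    moreover have "herm h (g *v a) = herm (g *v y) (g *v a)"
      using G_cancel_inv[OF g] by (simp add: y_def)
    moreover have "\<dots> = herm y a" using G_herm[OF g] .
    ultimately show ?thesis using herm_H_a by simp
  qed
  then show ?thesis using orthogonal_H_in_line by blast
qed

lemma eigenvector_centralises_P:
  assumes g: "g \<in> G" and ga: "g *v a = c *s a"
  shows "g ** mpow r j ** matrix_inv g = mpow r j"
proof (rule matrix_eq_on_H_and_a)
  have ig: "matrix_inv g *v a = inverse c *s a" using eigenvector_inverse[OF g ga] .
  show "(g ** mpow r j ** matrix_inv g) *v a = mpow r j *v a"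
    using eigenvalue_nonzero[OF g ga]
    by (simp add: matrix_vector_mul_assoc[symmetric] ig mpow_r_a ga vector_scalar_commute
        vector_smult_assoc)
  show "\<forall>h\<in>H. (g ** mpow r j ** matrix_inv g) *v h = mpow r j *v h"
  proof
    fix h assume "h \<in> H"
    then have "matrix_inv g *v h \<in> H"
      using eigenvector_preserves_H[OF G_matrix_inv[OF g] ig] by blast
    then show "(g ** mpow r j ** matrix_inv g) *v h = mpow r j *v h"
      using \<open>h \<in> H\<close> G_cancel_inv[OF g] by (simp add: matrix_vector_mul_assoc[symmetric] mpow_r_fixes_H)
  qed
qed

lemma normaliser_iff: "g \<in> normaliser G P \<longleftrightarrow> g \<in> G \<and> (\<exists>c. g *v a = c *s a)"
proof
  assume "g \<in> G \<and> (\<exists>c. g *v a = c *s a)"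
  then have "g \<in> G" "\<forall>p\<in>P. g ** p ** matrix_inv g = p"
    using eigenvector_centralises_P P_eq by auto
  then show "g \<in> normaliser G P" by (simp add: normaliser_def)
qed (use normaliser_eigenvector in \<open>auto simp: normaliser_def\<close>)

definition \<mu> where "\<mu> = {\<xi>. \<exists>g\<in>G. g *v a = \<xi> *s a}"

abbreviation m where "m \<equiv> card \<mu>"

lemma normaliser_eigenvalues: "{\<xi>. \<exists>g\<in>normaliser G P. g *v a = \<xi> *s a} = \<mu>"
  unfolding \<mu>_def using normaliser_iff by blast

lemma one_in_\<mu>: "1 \<in> \<mu>"
  unfolding \<mu>_def using G_one by force

lemma \<mu>_mult: "\<xi> \<in> \<mu> \<Longrightarrow> \<eta> \<in> \<mu> \<Longrightarrow> \<xi> * \<eta> \<in> \<mu>"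
  unfolding \<mu>_def using matrix_mul_eigenvector G_mult by blast

lemma \<mu>_power: "\<xi> \<in> \<mu> \<Longrightarrow> \<xi> ^ j \<in> \<mu>"
  by (induction j) (simp_all add: one_in_\<mu> \<mu>_mult)

lemma zero_notin_\<mu>: "0 \<notin> \<mu>"
  unfolding \<mu>_def using eigenvalue_nonzero by blast

lemma finite_\<mu>: "finite \<mu>"
proof -
  have "\<mu> \<subseteq> (\<lambda>g. SOME \<xi>. g *v a = \<xi> *s a) ` G"
  proof
    fix \<xi> assume "\<xi> \<in> \<mu>"
    then obtain g where g: "g \<in> G" "g *v a = \<xi> *s a" unfolding \<mu>_def by blast
    then have "(SOME \<xi>. g *v a = \<xi> *s a) = \<xi>"
      using vector_smult_cancel_right[OF a_nonzero] by auto
    then show "\<xi> \<in> (\<lambda>g. SOME \<xi>. g *v a = \<xi> *s a) ` G" using g(1) by force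
  qed
  then show ?thesis using G_finite finite_subset by blast
qed

lemma mem_\<mu>_iff: "\<xi> \<in> \<mu> \<longleftrightarrow> \<xi> ^ m = 1"
  using mult_closed_eq_roots_unity[OF finite_\<mu> zero_notin_\<mu> \<mu>_mult one_in_\<mu>] by blast

lemma m_pos: "m > 0"
  using finite_\<mu> one_in_\<mu> card_gt_0_iff by blast

lemma k_dvd_m: "k dvd m"
proof -
  have "\<omega> \<in> \<mu>" unfolding \<mu>_def using r_in_G r_a by blast
  then show ?thesis using mem_\<mu>_iff omega_power_eq_1_iff by blast
qed

lemma \<mu>_inverse: "\<xi> \<in> \<mu> \<Longrightarrow> inverse \<xi> \<in> \<mu>"
  unfolding \<mu>_def using eigenvector_inverse G_matrix_inv by blast

lemma P_subset_normaliser: "P \<subseteq> normaliser G P"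
  using P_eq normaliser_iff mpow_r_in_G mpow_r_a by auto

lemma normaliser_mult: "g \<in> normaliser G P \<Longrightarrow> h \<in> normaliser G P \<Longrightarrow> g ** h \<in> normaliser G P"
  using normaliser_iff G_mult matrix_mul_eigenvector by meson

abbreviation B where "B \<equiv> {(\<xi> ^ k) *s a | \<xi>. \<xi> \<in> \<mu>}"

lemma setwise_stab_B_iff: "g \<in> setwise_stab G B \<longleftrightarrow> g \<in> G \<and> (\<exists>\<eta>\<in>\<mu>. g *v a = \<eta> ^ k *s a)"
proof
  assume "g \<in> setwise_stab G B"
  moreover have "a \<in> B" using one_in_\<mu> by force
  ultimately show "g \<in> G \<and> (\<exists>\<eta>\<in>\<mu>. g *v a = \<eta> ^ k *s a)"
    by (force simp: setwise_stab_def)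
next
  assume "g \<in> G \<and> (\<exists>\<eta>\<in>\<mu>. g *v a = \<eta> ^ k *s a)"
  then obtain \<eta> where g: "g \<in> G" and \<eta>: "\<eta> \<in> \<mu>" and ga: "g *v a = \<eta> ^ k *s a" by blast
  have image: "g *v (\<xi> ^ k *s a) = (\<xi> * \<eta>) ^ k *s a" for \<xi>
    by (simp add: vector_scalar_commute ga vector_smult_assoc power_mult_distrib)
  have "\<eta> \<noteq> 0" using \<eta> zero_notin_\<mu> by blast
  then have "\<xi> ^ k *s a = g *v ((\<xi> * inverse \<eta>) ^ k *s a)" for \<xi>
    by (simp add: image mult.assoc)
  then have "(\<lambda>x. g *v x) ` B = B"
    using image \<mu>_mult[OF _ \<eta>] \<mu>_mult[OF _ \<mu>_inverse[OF \<eta>]] by blast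
  then show "g \<in> setwise_stab G B" using g by (simp add: setwise_stab_def)
qed

lemma complement_setwise_stab_B:
  assumes "coprime (m div k) k"
  shows "complement P (normaliser G P) (setwise_stab G B)"
proof -
  obtain d where m: "m = k * d" using k_dvd_m by blast
  have coprime: "coprime d k" using assms m k_pos by simp
  have roots: "\<xi> ^ (k * d) = 1" if "\<xi> \<in> \<mu>" for \<xi> using that mem_\<mu>_iff m by simp
  have stab_N: "setwise_stab G B \<subseteq> normaliser G P"
    using setwise_stab_B_iff normaliser_iff by blast
  have "normaliser G P \<subseteq> {p ** h | p h. p \<in> P \<and> h \<in> setwise_stab G B}"
  proof
    fix g assume "g \<in> normaliser G P"
    then obtain \<xi> where g: "g \<in> G" and ga: "g *v a = \<xi> *s a" and \<xi>: "\<xi> \<in> \<mu>"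
      using normaliser_iff \<mu>_def by blast
    obtain w x where "w ^ k = 1" "\<xi> = w * (\<xi> ^ x) ^ k"
      using root_unity_split_coprime[OF coprime k_pos roots[OF \<xi>]] by blast
    moreover obtain j where "w = \<omega> ^ j" using kth_root_unity_eq_omega_power \<open>w ^ k = 1\<close> by blast
    ultimately obtain h where "h \<in> G" "g = mpow r j ** h" "h *v a = (\<xi> ^ x) ^ k *s a"
      using split_off_mpow_r[OF g] ga by metis
    then show "g \<in> {p ** h | p h. p \<in> P \<and> h \<in> setwise_stab G B}"
      using setwise_stab_B_iff \<mu>_power[OF \<xi>] P_eq by blast
  qed
  moreover have "{p ** h | p h. p \<in> P \<and> h \<in> setwise_stab G B} \<subseteq> normaliser G P"
    using P_subset_normaliser stab_N normaliser_mult by blast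
  moreover have "P \<inter> setwise_stab G B \<subseteq> {mat 1}"
  proof
    fix p assume "p \<in> P \<inter> setwise_stab G B"
    then obtain j \<eta> where p: "p = mpow r j" and "\<eta> \<in> \<mu>" "p *v a = \<eta> ^ k *s a"
      using P_eq setwise_stab_B_iff by blast
    then have "\<omega> ^ j = \<eta> ^ k"
      using mpow_r_a vector_smult_cancel_right[OF a_nonzero] by metis
    moreover have "(\<eta> ^ k) ^ d = 1" using roots[OF \<open>\<eta> \<in> \<mu>\<close>] by (simp add: power_mult)
    moreover have "(\<omega> ^ j) ^ k = 1"
      using omega_power_eq_1_iff by (simp add: power_mult[symmetric])
    ultimately have "\<omega> ^ j = 1" using root_unity_eq_1_if_coprime[OF coprime k_pos] by simp
    then show "p \<in> {mat 1}" using p omega_power_eq_1_iff mpow_r_eq_1_iff by simp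
  qed
  moreover have "mat 1 \<in> P" using mpow_r_in_P[of 0] by simp
  moreover have "mat 1 \<in> setwise_stab G B"
    using is_subgroup_setwise_stab[OF G_subgroup] by (simp add: is_subgroup_def)
  ultimately show ?thesis
    using stab_N is_subgroup_setwise_stab[OF G_subgroup] by (auto simp: complement_def)
qed

lemma line_fixer_in_setwise_stab:
  assumes "D \<subseteq> {c *s a | c. True}" "h \<in> G" "h *v a = a"
  shows "h \<in> setwise_stab G D"
proof -
  have "h *v x = x" if "x \<in> D" for x
    using that assms(1,3) by (auto simp: vector_scalar_commute)
  then have "(\<lambda>x. h *v x) ` D = D" by (simp cong: image_cong)
  then show ?thesis using assms(2) by (simp add: setwise_stab_def)
qed

lemma coprime_if_complement_setwise_stab:
  assumes D: "D \<subseteq> {c *s a | c. True}"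
    and complement: "complement P (normaliser G P) (setwise_stab G D)"
  shows "coprime (m div k) k"
proof -
  let ?GD = "setwise_stab G D"
  obtain d where m: "m = k * d" using k_dvd_m by blast
  have "d > 0" using m m_pos by simp
  have GD: "is_subgroup ?GD" "?GD \<subseteq> normaliser G P"
    and N: "normaliser G P = {p ** h | p h. p \<in> P \<and> h \<in> ?GD}" and P_GD: "P \<inter> ?GD = {mat 1}"
    using complement by (auto simp: complement_def)
  have no_kth_roots: "z = 1" if h: "h \<in> ?GD" "h *v a = z *s a" and "z ^ k = 1" for h z
  proof -
    obtain j where "z = \<omega> ^ j" using kth_root_unity_eq_omega_power \<open>z ^ k = 1\<close> by blast
    then obtain h' where h': "h' \<in> G" "h = mpow r j ** h'" "h' *v a = a"
      using split_off_mpow_r[of h j 1] h by (auto simp: setwise_stab_def)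
    then have "h' \<in> ?GD" using line_fixer_in_setwise_stab[OF D] by blast
    then have "h ** matrix_inv h' \<in> ?GD" using GD(1) h(1) by (simp add: is_subgroup_def)
    moreover have "h ** matrix_inv h' = mpow r j"
      using h'(2) G_invertible[OF h'(1)] by (simp add: matrix_mul_assoc[symmetric] matrix_inv_right)
    ultimately have "mpow r j = mat 1" using P_GD mpow_r_in_P by (metis IntI singletonD)
    then show "z = 1" using \<open>z = \<omega> ^ j\<close> omega_power_eq_1_iff mpow_r_eq_1_iff by simp
  qed
  define \<zeta> where "\<zeta> = unit_root m"
  have "\<zeta> \<in> \<mu>" using mem_\<mu>_iff m_pos unit_root_power_eq_1_iff[of m m] by (simp add: \<zeta>_def)
  then obtain g where "g \<in> normaliser G P" "g *v a = \<zeta> *s a"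
    using normaliser_eigenvalues by blast
  then obtain p h where "p \<in> P" and h: "h \<in> ?GD" and g: "g = p ** h" "g *v a = \<zeta> *s a"
    using N by blast
  then obtain j where p: "p = mpow r j" using P_eq by blast
  from h obtain s where hs: "h *v a = s *s a" using GD(2) normaliser_iff by blast
  have "\<zeta> = s * \<omega> ^ j"
    using g p matrix_mul_eigenvector[OF mpow_r_a hs] vector_smult_cancel_right[OF a_nonzero]
    by (simp add: mult.commute)
  moreover have "s \<in> \<mu>" using h hs unfolding \<mu>_def setwise_stab_def by blast
  then have "s ^ (k * d) = 1" using mem_\<mu>_iff m by simp
  moreover have "(s ^ n) ^ k = 1 \<Longrightarrow> s ^ n = 1" for n
    using no_kth_roots[OF is_subgroup_mpow[OF GD(1) h] mpow_eigenvector[OF hs]] .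
  moreover have "(\<omega> ^ j) ^ k = 1" using omega_power_eq_1_iff by (simp add: power_mult[symmetric])
  moreover have "\<zeta> ^ i = 1 \<longleftrightarrow> k * d dvd i" for i
    using unit_root_power_eq_1_iff m m_pos by (simp add: \<zeta>_def)
  ultimately have "coprime d k"
    using coprime_if_roots_unity_split[OF k_pos \<open>d > 0\<close>, of \<zeta> s "\<omega> ^ j"] by blast
  then show ?thesis using m k_pos by simp
qed

end

theorem lemma5p2:
  fixes G P :: "('n::finite) cmat set" and r :: "'n cmat" and a :: "complex ^ 'n" and k :: nat
  assumes "unitary_reflection_group G"
    and "primitive G"
    and "CARD('n) \<ge> 2"
    and "parabolic_rank1 G P"
    and "r \<in> G" and "is_reflection r"
    and "P = {mpow r j | j. True}"
    and "k = mat_order r"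
    and "is_root r a"
  shows "let N = normaliser G P;
             mu = {\<xi>. \<exists>g\<in>N. g *v a = \<xi> *s a};
             m = card mu;
             B = {(\<xi> ^ k) *s a | \<xi>. \<xi> \<in> mu}
         in finite mu \<and> (\<exists>\<zeta>. mu = {\<zeta> ^ j | j. True}) \<and> k dvd m
          \<and> (coprime (m div k) k \<longrightarrow> complement P N (setwise_stab G B))
          \<and> (\<forall>D. D \<subseteq> {c *s a | c. True} \<and> complement P N (setwise_stab G D)
                 \<longrightarrow> coprime (m div k) k)"
proof -
  interpret reflection_with_root G P r a k
    using assms by unfold_locales (auto simp: unitary_reflection_group_def)
  have "\<mu> = {z. z ^ m = 1}" using mem_\<mu>_iff by blast
  also have "\<dots> = {unit_root m ^ j | j. True}"
    using m_pos by (intro roots_unity_eq_unit_root_powers) simp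
  finally have cyclic: "\<exists>\<zeta>. \<mu> = {\<zeta> ^ j | j. True}" by blast
  show ?thesis
    unfolding Let_def normaliser_eigenvalues
    using finite_\<mu> cyclic k_dvd_m complement_setwise_stab_B coprime_if_complement_setwise_stab
    by blast
qed

end
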